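(* Let $\{p_1,p_2,p_3\}=\mathcal{F}\subseteq\mathcal{O}$ be a normal family of three objects. Then at most $2$ faces of $G$ are type-$1$ singular faces for $\mathcal{F}$.
   Context: $G$ is a simple triangulated graph embedded on a sphere (every face is bounded by a triangle), with positive edge weights; $\mathrm{dist}(X,Y)$ denotes the minimum weight of a path between a vertex of $X$ and a vertex of $Y$. Each object $p$ has a location $\mathrm{loc}(p)$, a nonempty vertex set inducing a connected subgraph, and a radius $\mathrm{rad}(p)\ge 0$. A family $\mathcal{F}$ is normal if locations of its members are pairwise disjoint and $\mathrm{dist}(\mathrm{loc}(p_1),\mathrm{loc}(p_2))>\mathrm{rad}(p_1)-\mathrm{rad}(p_2)$ for all ordered pairs of distinct $p_1,p_2\in\mathcal{F}$. Standing assumption: all values $\mathrm{dist}(u,v)$ and $\mathrm{dist}(u,v)-\mathrm{rad}(p)$ are pairwise different and shortest paths are unique. The Voronoi partition $(M_p)_{p\in\mathcal{F}}$ assigns $v$ to $M_{p_0}$ iff $\mathrm{dist}(v,\mathrm{loc}(p_0))-\mathrm{rad}(p_0)$ is minimum over $p\in\mathcal{F}$. Regions $M_{p}$ and $M_{p'}$ ($p\ne p'$) meet at a face $f$ if the boundary of $f$ contains a vertex of $M_p$ and a vertex of $M_{p'}$. A face $f$ is a type-$1$ singular face for $\mathcal{F}$ if there are three distinct objects of $\mathcal{F}$ whose Voronoi regions pairwise meet at $f$. *)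

theory Defs
  imports Complex_Main
begin

definition gpath :: "'v set \<Rightarrow> 'v set set \<Rightarrow> 'v list \<Rightarrow> bool" where
  "gpath V E xs \<longleftrightarrow> xs \<noteq> [] \<and> distinct xs \<and> set xs \<subseteq> V \<and>
     (\<forall>i < length xs - 1. {xs ! i, xs ! Suc i} \<in> E)"

definition pweight :: "('v set \<Rightarrow> real) \<Rightarrow> 'v list \<Rightarrow> real" where
  "pweight w xs = (\<Sum>i < length xs - 1. w {xs ! i, xs ! Suc i})"

definition gdist :: "'v set \<Rightarrow> 'v set set \<Rightarrow> ('v set \<Rightarrow> real) \<Rightarrow> 'v \<Rightarrow> 'v \<Rightarrow> real" where
  "gdist V E w u v = Min {pweight w xs | xs. gpath V E xs \<and> hd xs = u \<and> last xs = v}"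

definition setdist :: "'v set \<Rightarrow> 'v set set \<Rightarrow> ('v set \<Rightarrow> real) \<Rightarrow> 'v set \<Rightarrow> 'v set \<Rightarrow> real" where
  "setdist V E w X Y = Min {gdist V E w u v | u v. u \<in> X \<and> v \<in> Y}"

definition induced_connected :: "'v set set \<Rightarrow> 'v set \<Rightarrow> bool" where
  "induced_connected E S \<longleftrightarrow>
     (\<forall>u\<in>S. \<forall>v\<in>S. \<exists>xs. gpath S E xs \<and> hd xs = u \<and> last xs = v)"

text \<open>Fc is the set of faces of the embedded graph, tri f the vertex set of the triangle
  bounding face f.  Conditions: simple graph; every face bounded by a triangle of G;
  every edge lies on exactly two faces; around each vertex the incident faces form a single
  cycle (faces adjacent when they share an edge through the vertex); connected; Euler
  characteristic 2.  These are exactly the triangulations of the 2-sphere.\<close>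

definition faces_at :: "'f set \<Rightarrow> ('f \<Rightarrow> 'v set) \<Rightarrow> 'v \<Rightarrow> 'f set" where
  "faces_at Fc tri v = {f \<in> Fc. v \<in> tri f}"

definition adj_at :: "'f set \<Rightarrow> ('f \<Rightarrow> 'v set) \<Rightarrow> 'v \<Rightarrow> 'f \<Rightarrow> 'f \<Rightarrow> bool" where
  "adj_at Fc tri v f g \<longleftrightarrow> f \<in> faces_at Fc tri v \<and> g \<in> faces_at Fc tri v \<and> f \<noteq> g \<and>
     (\<exists>a. a \<noteq> v \<and> a \<in> tri f \<and> a \<in> tri g)"

definition sphere_triangulation ::
  "'v set \<Rightarrow> 'v set set \<Rightarrow> 'f set \<Rightarrow> ('f \<Rightarrow> 'v set) \<Rightarrow> bool" where
  "sphere_triangulation V E Fc tri \<longleftrightarrow>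
     finite V \<and> finite Fc \<and> card V \<ge> 3 \<and>
     (\<forall>e\<in>E. e \<subseteq> V \<and> card e = 2) \<and>
     (\<forall>f\<in>Fc. tri f \<subseteq> V \<and> card (tri f) = 3 \<and>
        (\<forall>a\<in>tri f. \<forall>b\<in>tri f. a \<noteq> b \<longrightarrow> {a, b} \<in> E)) \<and>
     (\<forall>e\<in>E. card {f \<in> Fc. e \<subseteq> tri f} = 2) \<and>
     (\<forall>v\<in>V. \<forall>f\<in>faces_at Fc tri v. \<forall>g\<in>faces_at Fc tri v. (adj_at Fc tri v)\<^sup>*\<^sup>* f g) \<and>
     induced_connected E V \<and>
     int (card V) - int (card E) + int (card Fc) = 2"

definition is_object :: "'v set \<Rightarrow> 'v set set \<Rightarrow> ('o \<Rightarrow> 'v set) \<Rightarrow> ('o \<Rightarrow> real) \<Rightarrow> 'o \<Rightarrow> bool" where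
  "is_object V E loc rad p \<longleftrightarrow>
     loc p \<noteq> {} \<and> loc p \<subseteq> V \<and> induced_connected E (loc p) \<and> rad p \<ge> 0"

definition normal_family ::
  "'v set \<Rightarrow> 'v set set \<Rightarrow> ('v set \<Rightarrow> real) \<Rightarrow> ('o \<Rightarrow> 'v set) \<Rightarrow> ('o \<Rightarrow> real) \<Rightarrow> 'o set \<Rightarrow> bool" where
  "normal_family V E w loc rad F \<longleftrightarrow>
     (\<forall>p1\<in>F. \<forall>p2\<in>F. p1 \<noteq> p2 \<longrightarrow>
        loc p1 \<inter> loc p2 = {} \<and> setdist V E w (loc p1) (loc p2) > rad p1 - rad p2)"

definition standing_assumption ::
  "'v set \<Rightarrow> 'v set set \<Rightarrow> ('v set \<Rightarrow> real) \<Rightarrow> ('o \<Rightarrow> real) \<Rightarrow> 'o set \<Rightarrow> bool" where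
  "standing_assumption V E w rad F \<longleftrightarrow>
     (\<forall>u\<in>V. \<forall>v\<in>V. \<forall>u'\<in>V. \<forall>v'\<in>V.
        gdist V E w u v = gdist V E w u' v' \<longrightarrow>
          ({u, v} = {u', v'} \<or> (u = v \<and> u' = v'))) \<and>
     (\<forall>u\<in>V. \<forall>v\<in>V. \<forall>u'\<in>V. \<forall>v'\<in>V. \<forall>p\<in>F. \<forall>p'\<in>F.
        gdist V E w u v - rad p = gdist V E w u' v' - rad p' \<longrightarrow>
          (rad p = rad p' \<and> ({u, v} = {u', v'} \<or> (u = v \<and> u' = v')))) \<and>
     (\<forall>u\<in>V. \<forall>v\<in>V. \<exists>!xs. gpath V E xs \<and> hd xs = u \<and> last xs = v \<and>
        pweight w xs = gdist V E w u v)"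

definition voronoi ::
  "'v set \<Rightarrow> 'v set set \<Rightarrow> ('v set \<Rightarrow> real) \<Rightarrow> ('o \<Rightarrow> 'v set) \<Rightarrow> ('o \<Rightarrow> real) \<Rightarrow> 'o set \<Rightarrow> 'o \<Rightarrow> 'v set" where
  "voronoi V E w loc rad F p0 = {v \<in> V. \<forall>p\<in>F.
      setdist V E w {v} (loc p0) - rad p0 \<le> setdist V E w {v} (loc p) - rad p}"

definition meet_at ::
  "'v set \<Rightarrow> 'v set set \<Rightarrow> ('v set \<Rightarrow> real) \<Rightarrow> ('o \<Rightarrow> 'v set) \<Rightarrow> ('o \<Rightarrow> real) \<Rightarrow> 'o set \<Rightarrow>
   ('f \<Rightarrow> 'v set) \<Rightarrow> 'o \<Rightarrow> 'o \<Rightarrow> 'f \<Rightarrow> bool" where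
  "meet_at V E w loc rad F tri p p' f \<longleftrightarrow>
     (\<exists>a\<in>tri f. a \<in> voronoi V E w loc rad F p) \<and> (\<exists>b\<in>tri f. b \<in> voronoi V E w loc rad F p')"

definition type1_singular ::
  "'v set \<Rightarrow> 'v set set \<Rightarrow> ('v set \<Rightarrow> real) \<Rightarrow> ('o \<Rightarrow> 'v set) \<Rightarrow> ('o \<Rightarrow> real) \<Rightarrow> 'o set \<Rightarrow>
   ('f \<Rightarrow> 'v set) \<Rightarrow> 'f \<Rightarrow> bool" where
  "type1_singular V E w loc rad F tri f \<longleftrightarrow>
     (\<exists>q1\<in>F. \<exists>q2\<in>F. \<exists>q3\<in>F. q1 \<noteq> q2 \<and> q1 \<noteq> q3 \<and> q2 \<noteq> q3 \<and>
        meet_at V E w loc rad F tri q1 q2 f \<and> meet_at V E w loc rad F tri q1 q3 f \<and>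
        meet_at V E w loc rad F tri q2 q3 f)"

end

theory Submission
  imports Defs
begin

text \<open>The Voronoi regions of a normal family partition the vertices, and each region induces a
  connected subgraph: a shortest path from a vertex to a nearest vertex of its object never leaves
  the region, and the location itself is connected and contained in the region.  Colour every
  vertex by its region.  For a connected proper part S of a sphere triangulation, peeling off
  triangles along edges that lie on no other triangle of S gives |S| + F(S) \<le> E(S) + 1.
  Summed over the k colour classes and compared with Euler's formula, this shows that the
  bichromatic edges outnumber the non-monochromatic faces by at most k - 2.  Each such face has
  at least two bichromatic sides, a trichromatic one three, and each edge lies on two faces, so
  there are at most 2(k - 2) trichromatic faces; a type-1 singular face of three objects is
  trichromatic.\<close>

section \<open>Walks and shortest paths\<close>

fun walk :: "'v set \<Rightarrow> 'v set set \<Rightarrow> 'v list \<Rightarrow> bool" where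
  "walk V E [] = False"
| "walk V E [a] = (a \<in> V)"
| "walk V E (a # b # xs) = (a \<in> V \<and> {a, b} \<in> E \<and> walk V E (b # xs))"

fun walk_weight :: "('v set \<Rightarrow> real) \<Rightarrow> 'v list \<Rightarrow> real" where
  "walk_weight w (a # b # xs) = w {a, b} + walk_weight w (b # xs)"
| "walk_weight w _ = 0"

lemma gpath_iff_walk: "gpath V E xs \<longleftrightarrow> walk V E xs \<and> distinct xs"
proof (induction xs rule: walk.induct)
  case (3 V E a b xs)
  have "gpath V E (a # b # xs) \<longleftrightarrow> a \<in> V \<and> {a, b} \<in> E \<and> a \<notin> set (b # xs) \<and> gpath V E (b # xs)"
    unfolding gpath_def by (auto simp: less_Suc_eq_0_disj)
  with 3 show ?case by auto
qed (simp_all add: gpath_def)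

lemma pweight_eq_walk_weight: "pweight w xs = walk_weight w xs"
proof (induction w xs rule: walk_weight.induct)
  case (1 w a b xs)
  have "pweight w (a # b # xs) = w {a, b} + pweight w (b # xs)"
    unfolding pweight_def length_Cons diff_Suc_1 by (subst sum.lessThan_Suc_shift) simp
  with 1 show ?case by simp
qed (simp_all add: pweight_def)

lemma walk_Cons: "xs \<noteq> [] \<Longrightarrow> walk V E (a # xs) \<longleftrightarrow> a \<in> V \<and> {a, hd xs} \<in> E \<and> walk V E xs"
  by (cases xs) auto

lemma walk_weight_Cons: "xs \<noteq> [] \<Longrightarrow> walk_weight w (a # xs) = w {a, hd xs} + walk_weight w xs"
  by (cases xs) auto

lemma walk_not_Nil: "walk V E xs \<Longrightarrow> xs \<noteq> []"
  by (cases xs) auto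

lemma walk_set: "walk V E xs \<Longrightarrow> set xs \<subseteq> V"
  by (induction xs rule: walk.induct) auto

lemma walk_append:
  "xs \<noteq> [] \<Longrightarrow> ys \<noteq> [] \<Longrightarrow>
     walk V E (xs @ ys) \<longleftrightarrow> walk V E xs \<and> walk V E ys \<and> {last xs, hd ys} \<in> E"
  by (induction xs) (auto simp: walk_Cons)

lemma walk_weight_append:
  "xs \<noteq> [] \<Longrightarrow> ys \<noteq> [] \<Longrightarrow>
     walk_weight w (xs @ ys) = walk_weight w xs + w {last xs, hd ys} + walk_weight w ys"
  by (induction xs) (auto simp: walk_weight_Cons)

lemma walk_weight_split: "walk_weight w (ys @ x # zs) = walk_weight w (ys @ [x]) + walk_weight w (x # zs)"
  by (cases "ys = []"; cases "zs = []") (simp_all add: walk_weight_append walk_weight_Cons)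

lemma walk_rev: "walk V E (rev xs) \<longleftrightarrow> walk V E xs"
proof (induction xs)
  case (Cons a xs)
  then show ?case
    by (cases "xs = []") (auto simp: walk_append walk_Cons last_rev insert_commute)
qed simp

lemma walk_weight_rev: "walk_weight w (rev xs) = walk_weight w xs"
proof (induction xs)
  case (Cons a xs)
  then show ?case
    by (cases "xs = []") (auto simp: walk_weight_append walk_weight_Cons last_rev insert_commute)
qed simp

lemma walk_prefix: "walk V E (us @ vs) \<Longrightarrow> us \<noteq> [] \<Longrightarrow> walk V E us"
  by (cases "vs = []") (auto simp: walk_append)

lemma walk_suffix: "walk V E (us @ vs) \<Longrightarrow> vs \<noteq> [] \<Longrightarrow> walk V E vs"
  by (cases "us = []") (auto simp: walk_append)

definition simple_walks :: "'v set \<Rightarrow> 'v set set \<Rightarrow> 'v \<Rightarrow> 'v \<Rightarrow> 'v list set" where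
  "simple_walks V E u v = {xs. walk V E xs \<and> distinct xs \<and> hd xs = u \<and> last xs = v}"

lemma gdist_eq_Min_simple_walks: "gdist V E w u v = Min (walk_weight w ` simple_walks V E u v)"
proof -
  have "{pweight w xs | xs. gpath V E xs \<and> hd xs = u \<and> last xs = v} = walk_weight w ` simple_walks V E u v"
    by (auto simp: simple_walks_def gpath_iff_walk pweight_eq_walk_weight)
  then show ?thesis unfolding gdist_def by simp
qed

lemma finite_simple_walks: "finite V \<Longrightarrow> finite (simple_walks V E u v)"
  by (rule finite_subset[OF _ finite_subset_distinct[of V]]) (auto simp: simple_walks_def dest: walk_set)

lemma simple_walks_nonempty:
  "induced_connected E V \<Longrightarrow> u \<in> V \<Longrightarrow> v \<in> V \<Longrightarrow> simple_walks V E u v \<noteq> {}"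
  unfolding induced_connected_def simple_walks_def by (auto simp: gpath_iff_walk)

locale weighted_graph =
  fixes V :: "'v set" and E :: "'v set set" and w :: "'v set \<Rightarrow> real"
  assumes finite_V: "finite V"
    and connected: "induced_connected E V"
    and weight_pos: "\<forall>e\<in>E. w e > 0"
begin

abbreviation d :: "'v \<Rightarrow> 'v \<Rightarrow> real" where "d \<equiv> gdist V E w"

lemma walk_weight_nonneg: "walk V E xs \<Longrightarrow> walk_weight w xs \<ge> 0"
proof (induction xs)
  case (Cons a xs)
  then show ?case
    using weight_pos by (cases "xs = []") (auto simp: walk_Cons walk_weight_Cons add_nonneg_nonneg less_imp_le)
qed simp

text \<open>Cutting out the closed sub-walk between two visits of a vertex does not increase the weight.\<close>
lemma walk_shortcut:
  assumes "walk V E xs"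
  shows "\<exists>ys \<in> simple_walks V E (hd xs) (last xs). walk_weight w ys \<le> walk_weight w xs"
  using assms
proof (induction xs)
  case (Cons a xs)
  show ?case
  proof (cases "xs = []")
    case True
    with Cons.prems have "[a] \<in> simple_walks V E (hd (a # xs)) (last (a # xs))"
      by (simp add: simple_walks_def)
    then show ?thesis using True by force
  next
    case False
    with Cons.prems have a: "a \<in> V" "{a, hd xs} \<in> E" "walk V E xs" by (auto simp: walk_Cons)
    then obtain ys where ys: "ys \<in> simple_walks V E (hd xs) (last xs)" "walk_weight w ys \<le> walk_weight w xs"
      using Cons.IH by blast
    have weight: "walk_weight w (a # xs) = w {a, hd xs} + walk_weight w xs" "w {a, hd xs} > 0"
      using walk_weight_Cons[OF False] weight_pos a(2) by auto
    show ?thesis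
    proof (cases "a \<in> set ys")
      case False
      then have "a # ys \<in> simple_walks V E (hd (a # xs)) (last (a # xs))"
        using ys(1) a \<open>xs \<noteq> []\<close> by (auto simp: simple_walks_def walk_Cons dest: walk_not_Nil)
      moreover have "walk_weight w (a # ys) \<le> walk_weight w (a # xs)"
        using ys weight by (auto simp: simple_walks_def walk_weight_Cons dest: walk_not_Nil)
      ultimately show ?thesis by blast
    next
      case True
      then obtain us vs where uv: "ys = us @ a # vs" by (meson split_list)
      with ys(1) have "walk V E (us @ [a])" "walk V E (a # vs)"
        using walk_prefix[of V E "us @ [a]" vs] walk_suffix[of V E us "a # vs"]
        by (auto simp: simple_walks_def)
      then have "a # vs \<in> simple_walks V E (hd (a # xs)) (last (a # xs))"
        using ys(1) uv \<open>xs \<noteq> []\<close> by (auto simp: simple_walks_def)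
      moreover have "walk_weight w (a # vs) \<le> walk_weight w (a # xs)"
        using walk_weight_nonneg[OF \<open>walk V E (us @ [a])\<close>] walk_weight_split[of w us a vs] uv ys(2) weight
        by simp
      ultimately show ?thesis by blast
    qed
  qed
qed simp

lemma gdist_le_walk_weight:
  assumes "walk V E xs"
  shows "d (hd xs) (last xs) \<le> walk_weight w xs"
proof -
  obtain ys where "ys \<in> simple_walks V E (hd xs) (last xs)" "walk_weight w ys \<le> walk_weight w xs"
    using walk_shortcut[OF assms] by blast
  moreover from this(1) have "d (hd xs) (last xs) \<le> walk_weight w ys"
    unfolding gdist_eq_Min_simple_walks using finite_simple_walks[OF finite_V] by simp
  ultimately show ?thesis by simp
qed

lemma shortest_walk_exists:
  assumes "u \<in> V" "v \<in> V"
  obtains xs where "walk V E xs" "hd xs = u" "last xs = v" "walk_weight w xs = d u v"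
proof -
  have "Min (walk_weight w ` simple_walks V E u v) \<in> walk_weight w ` simple_walks V E u v"
    using finite_simple_walks[OF finite_V] simple_walks_nonempty[OF connected assms] by (intro Min_in) auto
  then show ?thesis using that by (auto simp: gdist_eq_Min_simple_walks simple_walks_def)
qed

lemma gdist_nonneg: "u \<in> V \<Longrightarrow> v \<in> V \<Longrightarrow> d u v \<ge> 0"
  by (metis shortest_walk_exists walk_weight_nonneg)

lemma gdist_self: "u \<in> V \<Longrightarrow> d u u = 0"
  using gdist_le_walk_weight[of "[u]"] gdist_nonneg[of u u] by simp

lemma gdist_le_gdist_swap:
  assumes "u \<in> V" "v \<in> V"
  shows "d u v \<le> d v u"
proof -
  obtain xs where xs: "walk V E xs" "hd xs = v" "last xs = u" "walk_weight w xs = d v u"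
    using shortest_walk_exists assms(2,1) by blast
  then show ?thesis
    using gdist_le_walk_weight[of "rev xs"] walk_not_Nil[OF xs(1)]
    by (simp add: walk_rev walk_weight_rev hd_rev last_rev)
qed

lemma gdist_commute: "u \<in> V \<Longrightarrow> v \<in> V \<Longrightarrow> d u v = d v u"
  using gdist_le_gdist_swap by (simp add: antisym)

lemma gdist_triangle:
  assumes "x \<in> V" "y \<in> V" "z \<in> V"
  shows "d x z \<le> d x y + d y z"
proof -
  obtain xs where xs: "walk V E xs" "hd xs = x" "last xs = y" "walk_weight w xs = d x y"
    using shortest_walk_exists assms(1,2) by blast
  obtain ys where ys: "walk V E ys" "hd ys = y" "last ys = z" "walk_weight w ys = d y z"
    using shortest_walk_exists assms(2,3) by blast
  obtain ys' where ys': "ys = y # ys'" using ys(1,2) walk_not_Nil by (cases ys) auto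
  show ?thesis
  proof (cases "ys' = []")
    case True
    with xs ys ys' show ?thesis by simp
  next
    case False
    have "walk V E (xs @ ys')" "walk_weight w (xs @ ys') = d x y + d y z"
      using xs ys ys' False walk_not_Nil[OF xs(1)]
      by (auto simp: walk_append walk_Cons walk_weight_append walk_weight_Cons)
    moreover have "hd (xs @ ys') = x" "last (xs @ ys') = z"
      using xs ys ys' False walk_not_Nil[OF xs(1)] by auto
    ultimately show ?thesis using gdist_le_walk_weight[of "xs @ ys'"] by simp
  qed
qed

end

section \<open>Connectivity and Voronoi regions\<close>

definition induced_adj :: "'v set \<Rightarrow> 'v set set \<Rightarrow> 'v \<Rightarrow> 'v \<Rightarrow> bool" where
  "induced_adj S E a b \<longleftrightarrow> a \<in> S \<and> b \<in> S \<and> {a, b} \<in> E"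

definition adj_connected :: "'v set set \<Rightarrow> 'v set \<Rightarrow> bool" where
  "adj_connected E S \<longleftrightarrow> (\<forall>x\<in>S. \<forall>y\<in>S. (induced_adj S E)\<^sup>*\<^sup>* x y)"

lemma walk_imp_induced_adj_rtranclp:
  "walk V E xs \<Longrightarrow> set xs \<subseteq> S \<Longrightarrow> (induced_adj S E)\<^sup>*\<^sup>* (hd xs) (last xs)"
proof (induction xs)
  case (Cons a xs)
  show ?case
  proof (cases "xs = []")
    case False
    with Cons.prems have "induced_adj S E a (hd xs)" "walk V E xs"
      by (auto simp: walk_Cons induced_adj_def)
    with Cons False show ?thesis by (simp add: converse_rtranclp_into_rtranclp)
  qed simp
qed simp

lemma induced_adj_rtranclp_sym: "(induced_adj S E)\<^sup>*\<^sup>* a b \<Longrightarrow> (induced_adj S E)\<^sup>*\<^sup>* b a"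
proof (induction rule: rtranclp_induct)
  case (step y z)
  then have "induced_adj S E z y" by (auto simp: induced_adj_def insert_commute)
  with step show ?case by (simp add: converse_rtranclp_into_rtranclp)
qed simp

lemma induced_adj_rtranclp_mono:
  "(induced_adj S E)\<^sup>*\<^sup>* a b \<Longrightarrow> S \<subseteq> S' \<Longrightarrow> (induced_adj S' E)\<^sup>*\<^sup>* a b"
proof (induction rule: rtranclp_induct)
  case (step y z)
  then have "induced_adj S' E y z" by (auto simp: induced_adj_def)
  with step show ?case by (simp add: rtranclp.rtrancl_into_rtrancl)
qed simp

lemma induced_connected_imp_adj_connected: "induced_connected E S \<Longrightarrow> adj_connected E S"
  unfolding induced_connected_def adj_connected_def
  by (metis gpath_iff_walk gpath_def walk_imp_induced_adj_rtranclp)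

lemma setdist_le_gdist:
  assumes "finite X" "finite Y" "x \<in> X" "y \<in> Y"
  shows "setdist V E w X Y \<le> gdist V E w x y"
proof -
  have "{gdist V E w u v | u v. u \<in> X \<and> v \<in> Y} = (\<lambda>(u, v). gdist V E w u v) ` (X \<times> Y)"
    by auto
  then show "setdist V E w X Y \<le> gdist V E w x y"
    using assms unfolding setdist_def by (auto intro!: Min_le)
qed

lemma setdist_singleton_attained:
  assumes "finite Y" "Y \<noteq> {}"
  obtains y where "y \<in> Y" "setdist V E w {x} Y = gdist V E w x y"
proof -
  have "{gdist V E w x' y | x' y. x' \<in> {x} \<and> y \<in> Y} = gdist V E w x ` Y" by auto
  moreover have "Min (gdist V E w x ` Y) \<in> gdist V E w x ` Y" using assms by (intro Min_in) auto
  ultimately show ?thesis using that unfolding setdist_def by auto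
qed

locale voronoi_family = weighted_graph V E w
  for V :: "'v set" and E :: "'v set set" and w :: "'v set \<Rightarrow> real" +
  fixes loc :: "'o \<Rightarrow> 'v set" and rad :: "'o \<Rightarrow> real" and F :: "'o set"
  assumes locations: "\<forall>p\<in>F. loc p \<noteq> {} \<and> loc p \<subseteq> V \<and> induced_connected E (loc p)"
    and general_position: "standing_assumption V E w rad F"
    and normal: "normal_family V E w loc rad F"
begin

abbreviation M :: "'o \<Rightarrow> 'v set" where "M \<equiv> voronoi V E w loc rad F"

definition wdist :: "'o \<Rightarrow> 'v \<Rightarrow> real" where
  "wdist p x = setdist V E w {x} (loc p) - rad p"

lemma finite_loc: "p \<in> F \<Longrightarrow> finite (loc p)"
  using locations finite_V finite_subset by blast

lemma wdist_le: "p \<in> F \<Longrightarrow> u \<in> loc p \<Longrightarrow> wdist p x \<le> d x u - rad p"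
  unfolding wdist_def using setdist_le_gdist[of "{x}" "loc p" x u] finite_loc by simp

lemma wdist_attained:
  assumes "p \<in> F"
  obtains u where "u \<in> loc p" "u \<in> V" "wdist p x = d x u - rad p"
proof -
  have "loc p \<noteq> {}" "loc p \<subseteq> V" using locations assms by auto
  moreover obtain u where "u \<in> loc p" "setdist V E w {x} (loc p) = d x u"
    using setdist_singleton_attained[OF finite_loc[OF assms] \<open>loc p \<noteq> {}\<close>] .
  ultimately show ?thesis using that unfolding wdist_def by auto
qed

lemma mem_voronoi_iff: "x \<in> M p \<longleftrightarrow> x \<in> V \<and> (\<forall>q\<in>F. wdist p x \<le> wdist q x)"
  by (simp add: voronoi_def wdist_def)

text \<open>Ties between two objects would need equal shifted distances to two distinct locations,
  which general position rules out.\<close>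
lemma voronoi_disjoint:
  assumes "p \<in> F" "q \<in> F" "p \<noteq> q"
  shows "M p \<inter> M q = {}"
proof (rule ccontr)
  assume "M p \<inter> M q \<noteq> {}"
  then obtain x where "x \<in> M p" "x \<in> M q" by blast
  then have x: "x \<in> V" "wdist p x = wdist q x"
    using assms(1,2) by (auto simp: mem_voronoi_iff intro: antisym)
  obtain u where u: "u \<in> loc p" "u \<in> V" "wdist p x = d x u - rad p"
    using wdist_attained assms(1) by blast
  obtain u' where u': "u' \<in> loc q" "u' \<in> V" "wdist q x = d x u' - rad q"
    using wdist_attained assms(2) by blast
  have "d x u - rad p = d x u' - rad q" using x u u' by simp
  then have "{x, u} = {x, u'} \<or> (x = u \<and> x = u')"
    using general_position x(1) u(2) u'(2) assms(1,2) unfolding standing_assumption_def by blast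
  then have "u = u'" by (auto simp: doubleton_eq_iff)
  moreover have "loc p \<inter> loc q = {}" using normal assms unfolding normal_family_def by blast
  ultimately show False using u u' by blast
qed

text \<open>Normality says exactly that each vertex of a location is closer to its own object
  than to any other one.\<close>
lemma loc_subset_voronoi:
  assumes "p \<in> F"
  shows "loc p \<subseteq> M p"
proof
  fix y assume y: "y \<in> loc p"
  have yV: "y \<in> V" using y locations assms by auto
  have own: "wdist p y \<le> - rad p" using wdist_le[OF assms y, of y] gdist_self[OF yV] by simp
  have "wdist p y \<le> wdist q y" if q: "q \<in> F" for q
  proof (cases "q = p")
    case False
    obtain z where z: "z \<in> loc q" "z \<in> V" "wdist q y = d y z - rad q" using wdist_attained q by blast
    have "rad q - rad p < setdist V E w (loc q) (loc p)"
      using normal q assms False unfolding normal_family_def by blast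
    also have "\<dots> \<le> d z y" using setdist_le_gdist[OF finite_loc[OF q] finite_loc[OF assms] z(1) y] .
    also have "\<dots> = d y z" using gdist_commute[OF z(2) yV] .
    finally show ?thesis using z own by simp
  qed simp
  then show "y \<in> M p" using yV by (simp add: mem_voronoi_iff)
qed

text \<open>Every vertex of a shortest walk from x to a nearest vertex of loc p
  is at least as close to p as x is, so the walk stays inside the region.\<close>
lemma voronoi_reaches_loc:
  assumes "p \<in> F" "x \<in> M p"
  obtains u where "u \<in> loc p" "(induced_adj (M p) E)\<^sup>*\<^sup>* x u"
proof -
  have xV: "x \<in> V" and xmin: "\<forall>q\<in>F. wdist p x \<le> wdist q x" using assms(2) by (auto simp: mem_voronoi_iff)
  obtain u where u: "u \<in> loc p" "u \<in> V" "wdist p x = d x u - rad p" using wdist_attained assms(1) by blast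
  obtain P where P: "walk V E P" "hd P = x" "last P = u" "walk_weight w P = d x u"
    using shortest_walk_exists[OF xV u(2)] by blast
  have "y \<in> M p" if y: "y \<in> set P" for y
  proof -
    obtain ys zs where yz: "P = ys @ y # zs" using y by (meson split_list)
    have yV: "y \<in> V" using walk_set[OF P(1)] y by auto
    have w: "walk V E (ys @ [y])" "walk V E (y # zs)"
      using walk_prefix[of V E "ys @ [y]" zs] walk_suffix[of V E ys "y # zs"] P(1) yz by simp_all
    have "hd (ys @ [y]) = x" using P(2) yz by (cases ys) simp_all
    moreover have "last (y # zs) = u" using P(3) yz by (cases zs) simp_all
    ultimately have "d x y \<le> walk_weight w (ys @ [y])" "d y u \<le> walk_weight w (y # zs)"
      using gdist_le_walk_weight[OF w(1)] gdist_le_walk_weight[OF w(2)] by simp_all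
    then have closer: "wdist p y \<le> wdist p x - d x y"
      using wdist_le[OF assms(1) u(1), of y] walk_weight_split[of w ys y zs] P(4) u(3) yz by simp
    have "wdist p y \<le> wdist q y" if q: "q \<in> F" for q
    proof -
      obtain z where z: "z \<in> loc q" "z \<in> V" "wdist q y = d y z - rad q" using wdist_attained q by blast
      have "wdist p x \<le> d x z - rad q" using xmin wdist_le[OF q z(1), of x] q by fastforce
      with gdist_triangle[OF xV yV z(2)] closer z(3) show ?thesis by simp
    qed
    then show ?thesis using yV by (simp add: mem_voronoi_iff)
  qed
  then have "(induced_adj (M p) E)\<^sup>*\<^sup>* (hd P) (last P)"
    using walk_imp_induced_adj_rtranclp[OF P(1)] by blast
  with that u(1) P(2,3) show ?thesis by blast
qed

lemma voronoi_adj_connected: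
  assumes "p \<in> F"
  shows "adj_connected E (M p)"
  unfolding adj_connected_def
proof (intro ballI)
  fix x y assume "x \<in> M p" "y \<in> M p"
  obtain u where u: "u \<in> loc p" "(induced_adj (M p) E)\<^sup>*\<^sup>* x u"
    using voronoi_reaches_loc[OF assms \<open>x \<in> M p\<close>] .
  obtain u' where u': "u' \<in> loc p" "(induced_adj (M p) E)\<^sup>*\<^sup>* y u'"
    using voronoi_reaches_loc[OF assms \<open>y \<in> M p\<close>] .
  have "adj_connected E (loc p)"
    using induced_connected_imp_adj_connected locations assms by blast
  then have "(induced_adj (loc p) E)\<^sup>*\<^sup>* u u'"
    using u(1) u'(1) unfolding adj_connected_def by blast
  then have uu': "(induced_adj (M p) E)\<^sup>*\<^sup>* u u'"
    by (rule induced_adj_rtranclp_mono[OF _ loc_subset_voronoi[OF assms]])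
  show "(induced_adj (M p) E)\<^sup>*\<^sup>* x y"
    using rtranclp_trans[OF rtranclp_trans[OF u(2) uu'] induced_adj_rtranclp_sym[OF u'(2)]] .
qed

lemma voronoi_cover:
  assumes "finite F" "F \<noteq> {}" "x \<in> V"
  obtains p where "p \<in> F" "x \<in> M p"
proof -
  obtain p where "p \<in> F" "\<forall>q\<in>F. wdist p x \<le> wdist q x"
    using ex_min_if_finite[of "(\<lambda>q. wdist q x) ` F"] assms(1,2) by (force simp: not_less)
  with that assms(3) show ?thesis by (simp add: mem_voronoi_iff)
qed

definition region_of :: "'v \<Rightarrow> 'o" where
  "region_of v = (SOME p. p \<in> F \<and> v \<in> M p)"

lemma region_of_eq:
  assumes "p \<in> F" "v \<in> M p"
  shows "region_of v = p"
  unfolding region_of_def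
proof (rule some_equality)
  show "p \<in> F \<and> v \<in> M p" using assms by simp
  fix q assume "q \<in> F \<and> v \<in> M q"
  with assms voronoi_disjoint[of q p] show "q = p" by blast
qed

lemma region_of_in_voronoi:
  assumes "finite F" "F \<noteq> {}" "v \<in> V"
  shows "region_of v \<in> F" "v \<in> M (region_of v)"
proof -
  obtain p where "p \<in> F" "v \<in> M p" using voronoi_cover[OF assms] .
  with region_of_eq show "region_of v \<in> F" "v \<in> M (region_of v)" by simp_all
qed

lemma voronoi_subset: "M p \<subseteq> V"
  by (auto simp: mem_voronoi_iff)

lemma fibre_region_of:
  assumes "finite F" "F \<noteq> {}" "p \<in> F"
  shows "{v \<in> V. region_of v = p} = M p"
proof (intro equalityI subsetI)
  fix v assume "v \<in> {v \<in> V. region_of v = p}"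
  then show "v \<in> M p" using region_of_in_voronoi(2)[OF assms(1,2)] by auto
next
  fix v assume "v \<in> M p"
  then show "v \<in> {v \<in> V. region_of v = p}" using region_of_eq[OF assms(3)] voronoi_subset by auto
qed

lemma region_of_image:
  assumes "finite F" "F \<noteq> {}"
  shows "region_of ` V = F"
proof
  show "region_of ` V \<subseteq> F" by (rule image_subsetI) (rule region_of_in_voronoi(1)[OF assms])
  show "F \<subseteq> region_of ` V"
  proof
    fix p assume p: "p \<in> F"
    then obtain u where "u \<in> loc p" using locations by blast
    then have "u \<in> M p" using loc_subset_voronoi[OF p] by blast
    then show "p \<in> region_of ` V" using region_of_eq[OF p] voronoi_subset by (metis image_eqI subsetD)
  qed
qed

end

section \<open>Connected parts of a sphere triangulation\<close>

text \<open>Each vertex other than a root r gets the edge to a neighbour strictly closer to r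
  (in hop count); this assigns distinct edges to distinct vertices.\<close>
lemma adj_connected_card_le:
  assumes "finite S" "finite ES" "adj_connected ES S"
  shows "card S \<le> card ES + 1"
proof (cases "S = {}")
  case False
  then obtain r where r: "r \<in> S" by blast
  let ?R = "induced_adj S ES"
  define n where "n u = (LEAST k. (?R ^^ k) r u)" for u
  have n_attained: "(?R ^^ n u) r u" if "u \<in> S" for u
  proof -
    have "?R\<^sup>*\<^sup>* r u" using assms(3) r that unfolding adj_connected_def by blast
    then have "\<exists>k. (?R ^^ k) r u" by (rule rtranclp_imp_relpowp)
    then show ?thesis unfolding n_def by (rule LeastI_ex)
  qed
  have n_le: "(?R ^^ k) r u \<Longrightarrow> n u \<le> k" for u k
    unfolding n_def by (rule Least_le)
  have closer: "\<exists>y. ?R y u \<and> n y < n u" if u: "u \<in> S" "u \<noteq> r" for u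
  proof -
    have "n u \<noteq> 0" using n_attained[OF u(1)] u(2) by (cases "n u") auto
    then have "(?R ^^ Suc (n u - 1)) r u" using n_attained[OF u(1)] by simp
    then obtain y where "(?R ^^ (n u - 1)) r y" "?R y u" by (rule relpowp_Suc_E)
    moreover from this(1) have "n y < n u" using n_le[of "n u - 1" y] \<open>n u \<noteq> 0\<close> by simp
    ultimately show ?thesis by blast
  qed
  define par where "par u = (SOME y. ?R y u \<and> n y < n u)" for u
  have par: "?R (par u) u \<and> n (par u) < n u" if "u \<in> S - {r}" for u
    unfolding par_def by (rule someI_ex) (use closer that in blast)
  have "inj_on (\<lambda>u. {u, par u}) (S - {r})"
  proof (rule inj_onI)
    fix u v assume u: "u \<in> S - {r}" and v: "v \<in> S - {r}" and eq: "{u, par u} = {v, par v}"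
    show "u = v"
    proof (rule ccontr)
      assume "u \<noteq> v"
      with eq have "u = par v" "v = par u" by (auto simp: doubleton_eq_iff)
      then have "n u < n v" "n v < n u" using par[OF u] par[OF v] by metis+
      then show False by simp
    qed
  qed
  moreover have "(\<lambda>u. {u, par u}) ` (S - {r}) \<subseteq> ES"
    using par by (auto simp: induced_adj_def insert_commute)
  ultimately have "card (S - {r}) \<le> card ES" using card_inj_on_le assms(2) by blast
  then show ?thesis using r assms(1) by (simp add: card_Diff_singleton)
qed simp

lemma adj_connected_remove_triangle_side:
  assumes "adj_connected ES S" "c \<in> S" "{a, c} \<in> ES" "{c, b} \<in> ES" "c \<noteq> a" "c \<noteq> b"
  shows "adj_connected (ES - {{a, b}}) S"
proof -
  let ?R' = "induced_adj S (ES - {{a, b}})"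
  have edge: "?R'\<^sup>*\<^sup>* x y" if "induced_adj S ES x y" for x y
  proof (cases "{x, y} = {a, b}")
    case True
    then have "x = a \<and> y = b \<or> x = b \<and> y = a" by (auto simp: doubleton_eq_iff)
    then have "?R' x c \<and> ?R' c y"
      using that assms(2-6) by (auto simp: induced_adj_def doubleton_eq_iff insert_commute)
    then show ?thesis by (meson converse_rtranclp_into_rtranclp rtranclp.rtrancl_refl)
  next
    case False
    with that have "?R' x y" by (simp add: induced_adj_def)
    then show ?thesis by simp
  qed
  have "?R'\<^sup>*\<^sup>* x y" if "(induced_adj S ES)\<^sup>*\<^sup>* x y" for x y
    using that by (induction rule: rtranclp_induct) (auto dest: edge intro: rtranclp_trans)
  with assms(1) show ?thesis unfolding adj_connected_def by blast
qed

definition has_free_edge :: "('f \<Rightarrow> 'v set) \<Rightarrow> 'f set \<Rightarrow> bool" where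
  "has_free_edge tri Q \<longleftrightarrow>
     (\<exists>g\<in>Q. \<exists>a b. a \<noteq> b \<and> {a, b} \<subseteq> tri g \<and> (\<forall>h\<in>Q - {g}. \<not> {a, b} \<subseteq> tri h))"

text \<open>Removing a triangle together with a side that lies on no other remaining triangle keeps
  the graph connected, so the triangles can be peeled off one by one down to the bound
  for connected graphs.\<close>
lemma card_vertices_faces_le:
  assumes "finite S" "finite ES" "finite FS"
    and "\<forall>f\<in>FS. tri f \<subseteq> S \<and> card (tri f) = 3 \<and> (\<forall>a\<in>tri f. \<forall>b\<in>tri f. a \<noteq> b \<longrightarrow> {a, b} \<in> ES)"
    and "adj_connected ES S"
    and "\<forall>Q\<subseteq>FS. Q \<noteq> {} \<longrightarrow> has_free_edge tri Q"
  shows "card S + card FS \<le> card ES + 1"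
  using assms(3,2,4-)
proof (induction FS arbitrary: ES rule: finite_remove_induct)
  case empty
  then show ?case using adj_connected_card_le[OF assms(1)] by simp
next
  case (remove FS)
  have "has_free_edge tri FS" using remove.prems(4) remove.hyps(2) by simp
  then obtain g a b where g: "g \<in> FS" "a \<noteq> b" "{a, b} \<subseteq> tri g"
    and free: "\<forall>h\<in>FS - {g}. \<not> {a, b} \<subseteq> tri h"
    unfolding has_free_edge_def by blast
  have "card (tri g - {a, b}) = 1" using remove.prems(2) g by (simp add: card_Diff_subset)
  then obtain c where c: "c \<in> tri g" "c \<noteq> a" "c \<noteq> b" by (metis Diff_iff card_1_singletonE insertCI)
  have ab: "{a, b} \<in> ES" using remove.prems(2) g by blast
  have "card S + card (FS - {g}) \<le> card (ES - {{a, b}}) + 1"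
  proof (rule remove.IH[OF g(1)])
    show "finite (ES - {{a, b}})" using remove.prems(1) by simp
    show "\<forall>f\<in>FS - {g}. tri f \<subseteq> S \<and> card (tri f) = 3 \<and>
        (\<forall>x\<in>tri f. \<forall>y\<in>tri f. x \<noteq> y \<longrightarrow> {x, y} \<in> ES - {{a, b}})"
      using remove.prems(2) free by (fastforce simp: doubleton_eq_iff)
    have "tri g \<subseteq> S" "\<forall>x\<in>tri g. \<forall>y\<in>tri g. x \<noteq> y \<longrightarrow> {x, y} \<in> ES"
      using remove.prems(2) g(1) by auto
    then have "c \<in> S" "{a, c} \<in> ES" "{c, b} \<in> ES" using g(3) c by auto
    then show "adj_connected (ES - {{a, b}}) S"
      using adj_connected_remove_triangle_side[OF remove.prems(3)] c(2,3) by blast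
    show "\<forall>Q\<subseteq>FS - {g}. Q \<noteq> {} \<longrightarrow> has_free_edge tri Q"
      using remove.prems(4) by blast
  qed
  then show ?case using g(1) ab remove.hyps(1) remove.prems(1) card_gt_0_iff[of ES]
    by (auto simp: card_Diff_singleton)
qed

locale triangulated_sphere =
  fixes V :: "'v set" and E :: "'v set set" and Fc :: "'f set" and tri :: "'f \<Rightarrow> 'v set"
  assumes sphere: "sphere_triangulation V E Fc tri"
begin

lemma finite_V: "finite V"
  using sphere by (simp add: sphere_triangulation_def)

lemma finite_Fc: "finite Fc"
  using sphere by (simp add: sphere_triangulation_def)

lemma edge_subset: "e \<in> E \<Longrightarrow> e \<subseteq> V"
  using sphere by (simp add: sphere_triangulation_def)

lemma edge_card: "e \<in> E \<Longrightarrow> card e = 2"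
  using sphere by (simp add: sphere_triangulation_def)

lemma finite_E: "finite E"
  using finite_V edge_subset by (meson Pow_iff finite_Pow_iff finite_subset subsetI)

lemma face_subset: "f \<in> Fc \<Longrightarrow> tri f \<subseteq> V"
  using sphere by (simp add: sphere_triangulation_def)

lemma face_card: "f \<in> Fc \<Longrightarrow> card (tri f) = 3"
  using sphere by (simp add: sphere_triangulation_def)

lemma face_side: "f \<in> Fc \<Longrightarrow> a \<in> tri f \<Longrightarrow> b \<in> tri f \<Longrightarrow> a \<noteq> b \<Longrightarrow> {a, b} \<in> E"
  using sphere by (simp add: sphere_triangulation_def)

lemma edge_two_faces: "e \<in> E \<Longrightarrow> card {f \<in> Fc. e \<subseteq> tri f} = 2"
  using sphere by (simp add: sphere_triangulation_def)

lemma vertex_star_connected: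
  "v \<in> V \<Longrightarrow> f \<in> faces_at Fc tri v \<Longrightarrow> g \<in> faces_at Fc tri v \<Longrightarrow> (adj_at Fc tri v)\<^sup>*\<^sup>* f g"
  using sphere by (simp add: sphere_triangulation_def)

lemma connected_V: "induced_connected E V"
  using sphere by (simp add: sphere_triangulation_def)

lemma euler: "int (card V) - int (card E) + int (card Fc) = 2"
  using sphere by (simp add: sphere_triangulation_def)

lemma edge_on_face:
  assumes "e \<in> E"
  obtains f where "f \<in> Fc" "e \<subseteq> tri f"
proof -
  have "{f \<in> Fc. e \<subseteq> tri f} \<noteq> {}" using edge_two_faces[OF assms] by (metis card.empty zero_neq_numeral)
  with that show ?thesis by blast
qed

lemma vertex_on_face:
  assumes "v \<in> V"
  obtains f where "f \<in> Fc" "v \<in> tri f"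
proof -
  have "card V \<ge> 3" using sphere by (simp add: sphere_triangulation_def)
  then have "card (V - {v}) \<noteq> 0" using assms finite_V by (simp add: card_Diff_singleton)
  then obtain u where "u \<in> V - {v}" by (metis card.empty ex_in_conv)
  then have u: "u \<in> V" "u \<noteq> v" by simp_all
  obtain xs where xs: "gpath V E xs" "hd xs = v" "last xs = u"
    using connected_V u(1) assms unfolding induced_connected_def by blast
  then obtain x rest where "xs = v # x # rest"
    using u(2) unfolding gpath_def by (cases xs; cases "tl xs") auto
  with xs(1) have "{v, x} \<in> E" by (simp add: gpath_iff_walk)
  then obtain f where "f \<in> Fc" "{v, x} \<subseteq> tri f" using edge_on_face by blast
  with that show ?thesis by blast
qed

text \<open>The faces around a vertex form one cycle and the graph is connected, so edge-adjacency
  of faces is a connected relation.\<close>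
lemma edge_closed_faces_eq_Fc:
  assumes Q: "Q \<subseteq> Fc" "Q \<noteq> {}"
    and closed: "\<And>g h e. g \<in> Q \<Longrightarrow> h \<in> Fc \<Longrightarrow> e \<in> E \<Longrightarrow> e \<subseteq> tri g \<Longrightarrow> e \<subseteq> tri h \<Longrightarrow> h \<in> Q"
  shows "Q = Fc"
proof -
  have star: "g \<in> Q" if v: "v \<in> V" and f: "f \<in> faces_at Fc tri v" "f \<in> Q"
    and g: "g \<in> faces_at Fc tri v" for v f g
  proof -
    have "(adj_at Fc tri v)\<^sup>*\<^sup>* f g" using vertex_star_connected v f g by blast
    then show ?thesis
    proof (induction rule: rtranclp_induct)
      case (step y z)
      then obtain a where a: "a \<noteq> v" "a \<in> tri y" "a \<in> tri z" "y \<in> Fc" "z \<in> Fc"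
        "v \<in> tri y" "v \<in> tri z"
        unfolding adj_at_def faces_at_def by blast
      then have "{v, a} \<in> E" "{v, a} \<subseteq> tri y" "{v, a} \<subseteq> tri z" using face_side by auto
      with closed step.IH a(5) show ?case by blast
    qed (use f in simp)
  qed
  define B where "B = {v \<in> V. \<exists>f\<in>Q. v \<in> tri f}"
  have B_step: "y \<in> B" if xB: "x \<in> B" and xy: "induced_adj V E x y" for x y
  proof -
    have e: "{x, y} \<in> E" "x \<in> V" "y \<in> V" using xy by (auto simp: induced_adj_def)
    obtain h where h: "h \<in> Fc" "{x, y} \<subseteq> tri h" using edge_on_face[OF e(1)] by blast
    obtain f where f: "f \<in> Q" "x \<in> tri f" using xB unfolding B_def by blast
    have "h \<in> Q" using star[OF e(2), of f h] f h Q(1) by (auto simp: faces_at_def)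
    with h e show ?thesis by (auto simp: B_def)
  qed
  obtain q x0 where q: "q \<in> Q" "x0 \<in> tri q"
    using Q face_card by (metis all_not_in_conv card.empty subsetD zero_neq_numeral)
  have x0B: "x0 \<in> B" using q Q(1) face_subset by (auto simp: B_def)
  have all_B: "v \<in> B" if "v \<in> V" for v
  proof -
    have "(induced_adj V E)\<^sup>*\<^sup>* x0 v"
      using induced_connected_imp_adj_connected[OF connected_V] x0B that
      unfolding adj_connected_def B_def by blast
    then show ?thesis by (induction rule: rtranclp_induct) (use x0B B_step in blast)+
  qed
  have "f \<in> Q" if f: "f \<in> Fc" for f
  proof -
    obtain v where v: "v \<in> tri f"
      using face_card[OF f] by (metis all_not_in_conv card.empty zero_neq_numeral)
    have vV: "v \<in> V" using face_subset f v by blast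
    obtain f' where "f' \<in> Q" "v \<in> tri f'" using all_B[OF vV] by (auto simp: B_def)
    then show "f \<in> Q" using star[OF vV, of f' f] f v Q(1) by (auto simp: faces_at_def)
  qed
  with Q(1) show ?thesis by blast
qed

text \<open>Faces inside a proper part are not closed under edge-adjacency, and an edge leaving the
  family lies on only one face of it, because every edge lies on exactly two faces.\<close>
lemma proper_part_has_free_edge:
  assumes S: "S \<subseteq> V" "S \<noteq> V" and Q: "Q \<subseteq> {f \<in> Fc. tri f \<subseteq> S}" "Q \<noteq> {}"
  shows "has_free_edge tri Q"
proof -
  have "Q \<noteq> Fc"
  proof
    assume "Q = Fc"
    have "V \<subseteq> S"
    proof
      fix v assume "v \<in> V"
      then obtain f where "f \<in> Fc" "v \<in> tri f" using vertex_on_face by blast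
      with Q(1) \<open>Q = Fc\<close> show "v \<in> S" by blast
    qed
    with S show False by blast
  qed
  moreover have QF: "Q \<subseteq> Fc" using Q(1) by blast
  ultimately have "\<not> (\<forall>g h e. g \<in> Q \<longrightarrow> h \<in> Fc \<longrightarrow> e \<in> E \<longrightarrow> e \<subseteq> tri g \<longrightarrow> e \<subseteq> tri h \<longrightarrow> h \<in> Q)"
    using edge_closed_faces_eq_Fc[OF QF Q(2)] by blast
  then obtain g h e where g: "g \<in> Q" "h \<in> Fc" "e \<in> E" "e \<subseteq> tri g" "e \<subseteq> tri h" "h \<notin> Q"
    by blast
  obtain a b where ab: "a \<noteq> b" "e = {a, b}" using edge_card[OF g(3)] by (meson card_2_iff)
  have "\<not> e \<subseteq> tri h'" if h': "h' \<in> Q - {g}" for h'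
  proof
    assume "e \<subseteq> tri h'"
    then have sub: "{g, h, h'} \<subseteq> {f \<in> Fc. e \<subseteq> tri f}" using g h' Q(1) by auto
    have "h \<noteq> g" "h' \<noteq> h" "h' \<noteq> g" using g(1,6) h' by auto
    then have "card {g, h, h'} = 3" by simp
    moreover have "card {g, h, h'} \<le> card {f \<in> Fc. e \<subseteq> tri f}"
      by (rule card_mono[OF _ sub]) (simp add: finite_Fc)
    ultimately show False using edge_two_faces[OF g(3)] by simp
  qed
  then have "a \<noteq> b \<and> {a, b} \<subseteq> tri g \<and> (\<forall>h'\<in>Q - {g}. \<not> {a, b} \<subseteq> tri h')"
    using g(4) ab by simp
  with g(1) show ?thesis unfolding has_free_edge_def by blast
qed

lemma card_part_le:
  assumes "S \<subseteq> V" "S \<noteq> V" "adj_connected E S"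
  shows "card S + card {f \<in> Fc. tri f \<subseteq> S} \<le> card {e \<in> E. e \<subseteq> S} + 1"
proof (rule card_vertices_faces_le)
  show "finite S" using finite_V assms(1) finite_subset by blast
  show "finite {e \<in> E. e \<subseteq> S}" using finite_E by simp
  show "finite {f \<in> Fc. tri f \<subseteq> S}" using finite_Fc by simp
  show "\<forall>f\<in>{f \<in> Fc. tri f \<subseteq> S}. tri f \<subseteq> S \<and> card (tri f) = 3 \<and>
      (\<forall>a\<in>tri f. \<forall>b\<in>tri f. a \<noteq> b \<longrightarrow> {a, b} \<in> {e \<in> E. e \<subseteq> S})"
    using face_card face_side by auto
  have "induced_adj S {e \<in> E. e \<subseteq> S} = induced_adj S E"
    by (auto simp: induced_adj_def fun_eq_iff)
  then show "adj_connected {e \<in> E. e \<subseteq> S} S" using assms(3) by (simp add: adj_connected_def)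
  show "\<forall>Q\<subseteq>{f \<in> Fc. tri f \<subseteq> S}. Q \<noteq> {} \<longrightarrow> has_free_edge tri Q"
    using proper_part_has_free_edge[OF assms(1,2)] by blast
qed

end

section \<open>Colourings with connected colour classes\<close>

lemma card_colours_le_card_bichromatic_pairs:
  assumes "card T = 3" "card (col ` T) \<ge> 2"
  shows "card (col ` T) \<le> card {{x, y} | x y. x \<in> T \<and> y \<in> T \<and> col x \<noteq> col y}"
    (is "_ \<le> card ?P")
proof -
  have "finite T" using assms(1) by (metis card.infinite zero_neq_numeral)
  then have "finite ?P" by (rule finite_subset[rotated, OF finite_Pow_iff[THEN iffD2]]) auto
  have pair_mem: "{x, y} \<in> ?P" if "x \<in> T" "y \<in> T" "col x \<noteq> col y" for x y
    by (intro CollectI exI[of _ x] exI[of _ y]) (use that in simp)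
  have "card (col ` T) \<le> 3" using card_image_le[OF \<open>finite T\<close>, of col] assms(1) by simp
  with assms(2) consider "card (col ` T) = 3" | "card (col ` T) = 2" by linarith
  then show ?thesis
  proof cases
    case 1
    obtain a b c where T: "T = {a, b, c}" "a \<noteq> b" "b \<noteq> c" "a \<noteq> c"
      using assms(1) by (auto simp: card_3_iff)
    have "inj_on col T" using 1 assms(1) \<open>finite T\<close> by (simp add: inj_on_iff_eq_card)
    then have "col a \<noteq> col b" "col b \<noteq> col c" "col a \<noteq> col c" using T by (auto dest: inj_onD)
    then have "{{a, b}, {a, c}, {b, c}} \<subseteq> ?P" using pair_mem T(1) by simp
    then have "card {{a, b}, {a, c}, {b, c}} \<le> card ?P" by (rule card_mono[OF \<open>finite ?P\<close>])
    moreover have "card {{a, b}, {a, c}, {b, c}} = 3" using T(2-4) by (auto simp: card_insert_if doubleton_eq_iff)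
    ultimately show ?thesis using 1 by linarith
  next
    case 2
    then have "\<not> inj_on col T" using assms(1) \<open>finite T\<close> by (simp add: inj_on_iff_eq_card)
    then obtain x y where xy: "x \<in> T" "y \<in> T" "x \<noteq> y" "col x = col y" by (auto simp: inj_on_def)
    have "col ` T \<noteq> {col x}" using 2 by auto
    then obtain z where z: "z \<in> T" "col z \<noteq> col x" using xy(1) by blast
    have "{{x, z}, {y, z}} \<subseteq> ?P" using pair_mem xy z by simp
    then have "card {{x, z}, {y, z}} \<le> card ?P" by (rule card_mono[OF \<open>finite ?P\<close>])
    moreover have "card {{x, z}, {y, z}} = 2" using xy(3) by (auto simp: card_insert_if doubleton_eq_iff)
    ultimately show ?thesis using 2 by linarith
  qed
qed

lemma card_filter_ex_classes:
  assumes "finite A" "finite C" "\<forall>x\<in>A. g x \<noteq> {}" "\<forall>c\<in>C. \<forall>c'\<in>C. c \<noteq> c' \<longrightarrow> K c \<inter> K c' = {}"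
  shows "card {x \<in> A. \<exists>c\<in>C. g x \<subseteq> K c} = (\<Sum>c\<in>C. card {x \<in> A. g x \<subseteq> K c})"
proof -
  have "{x \<in> A. \<exists>c\<in>C. g x \<subseteq> K c} = (\<Union>c\<in>C. {x \<in> A. g x \<subseteq> K c})" by blast
  moreover have "{x \<in> A. g x \<subseteq> K c} \<inter> {x \<in> A. g x \<subseteq> K c'} = {}" if "c \<in> C" "c' \<in> C" "c \<noteq> c'" for c c'
    using assms(3,4) that by blast
  ultimately show ?thesis using assms(1,2) by (simp add: card_UN_disjoint)
qed

lemma sum_card_filter_swap:
  assumes "finite A" "finite B"
  shows "(\<Sum>a\<in>A. card {b \<in> B. P a b}) = (\<Sum>b\<in>B. card {a \<in> A. P a b})"
proof -
  have "(\<Sum>a\<in>A. card {b \<in> B. P a b}) = (\<Sum>a\<in>A. \<Sum>b\<in>B. if P a b then 1 else 0)"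
    using assms by (simp add: sum.If_cases Int_def)
  also have "\<dots> = (\<Sum>b\<in>B. \<Sum>a\<in>A. if P a b then 1 else 0)" by (rule sum.swap)
  also have "\<dots> = (\<Sum>b\<in>B. card {a \<in> A. P a b})"
    using assms by (simp add: sum.If_cases Int_def)
  finally show ?thesis .
qed

context triangulated_sphere
begin

definition colour_class :: "('v \<Rightarrow> 'c) \<Rightarrow> 'c \<Rightarrow> 'v set" where
  "colour_class col c = {v \<in> V. col v = c}"

definition mono_edges :: "('v \<Rightarrow> 'c) \<Rightarrow> 'v set set" where
  "mono_edges col = {e \<in> E. \<exists>c\<in>col ` V. e \<subseteq> colour_class col c}"

definition mono_faces :: "('v \<Rightarrow> 'c) \<Rightarrow> 'f set" where
  "mono_faces col = {f \<in> Fc. \<exists>c\<in>col ` V. tri f \<subseteq> colour_class col c}"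

lemma face_nonempty: "f \<in> Fc \<Longrightarrow> tri f \<noteq> {}"
  using face_card by fastforce

lemma colour_classes_disjoint:
  "c \<noteq> c' \<Longrightarrow> colour_class col c \<inter> colour_class col c' = {}"
  by (auto simp: colour_class_def)

lemma card_V_mono_faces_le:
  assumes "\<forall>c\<in>col ` V. adj_connected E (colour_class col c)" "card (col ` V) \<ge> 2"
  shows "card V + card (mono_faces col) \<le> card (mono_edges col) + card (col ` V)"
proof -
  let ?C = "col ` V" and ?K = "colour_class col"
  have fin: "finite ?C" using finite_V by simp
  have disj: "\<forall>c\<in>?C. \<forall>c'\<in>?C. c \<noteq> c' \<longrightarrow> ?K c \<inter> ?K c' = {}"
    by (simp add: colour_classes_disjoint)
  have "?K c \<noteq> V" if "c \<in> ?C" for c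
  proof
    assume "?K c = V"
    then have "?C \<subseteq> {c}" by (auto simp: colour_class_def)
    with assms(2) show False using card_mono[of "{c}" ?C] by simp
  qed
  then have part: "card (?K c) + card {f \<in> Fc. tri f \<subseteq> ?K c} \<le> card {e \<in> E. e \<subseteq> ?K c} + 1"
    if "c \<in> ?C" for c
    using card_part_le assms(1) that by (auto simp: colour_class_def)
  have "card V = (\<Sum>c\<in>?C. card {v \<in> V. {v} \<subseteq> ?K c})"
  proof -
    have "{v \<in> V. \<exists>c\<in>?C. {v} \<subseteq> ?K c} = V" by (auto simp: colour_class_def)
    then show ?thesis using card_filter_ex_classes[OF finite_V fin _ disj, of "\<lambda>v. {v}"] by simp
  qed
  also have "\<dots> = (\<Sum>c\<in>?C. card (?K c))"
    by (intro sum.cong) (auto simp: colour_class_def intro!: arg_cong[where f = card])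
  finally have "card V + card (mono_faces col) =
      (\<Sum>c\<in>?C. card (?K c) + card {f \<in> Fc. tri f \<subseteq> ?K c})"
    using card_filter_ex_classes[OF finite_Fc fin _ disj, of tri] face_nonempty
    by (simp add: mono_faces_def sum.distrib)
  also have "\<dots> \<le> (\<Sum>c\<in>?C. card {e \<in> E. e \<subseteq> ?K c} + 1)"
    by (rule sum_mono) (rule part)
  also have "\<dots> = card (mono_edges col) + card ?C"
  proof -
    have "\<forall>e\<in>E. e \<noteq> {}" using edge_card by fastforce
    then show ?thesis
      using card_filter_ex_classes[where g = "\<lambda>e. e", OF finite_E fin _ disj]
      by (simp add: mono_edges_def sum_Suc)
  qed
  finally show ?thesis .
qed

lemma bichromatic_sides:
  assumes "f \<in> Fc"
  shows "{e \<in> E - mono_edges col. e \<subseteq> tri f} =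
    {{x, y} | x y. x \<in> tri f \<and> y \<in> tri f \<and> col x \<noteq> col y}"
proof (intro equalityI subsetI)
  fix e assume e: "e \<in> {e \<in> E - mono_edges col. e \<subseteq> tri f}"
  then have "card e = 2" using edge_card by blast
  then obtain x y where xy: "e = {x, y}" "x \<noteq> y" by (auto simp: card_2_iff)
  have "x \<in> V" using e xy edge_subset by blast
  then have "col x \<noteq> col y"
    using e xy edge_subset by (auto simp: mono_edges_def colour_class_def)
  with e xy show "e \<in> {{x, y} | x y. x \<in> tri f \<and> y \<in> tri f \<and> col x \<noteq> col y}" by blast
next
  fix e assume "e \<in> {{x, y} | x y. x \<in> tri f \<and> y \<in> tri f \<and> col x \<noteq> col y}"
  then obtain x y where xy: "e = {x, y}" "x \<in> tri f" "y \<in> tri f" "col x \<noteq> col y" by blast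
  then have "e \<in> E" using face_side[OF assms] by fastforce
  moreover have "e \<notin> mono_edges col" using xy by (auto simp: mono_edges_def colour_class_def)
  ultimately show "e \<in> {e \<in> E - mono_edges col. e \<subseteq> tri f}" using xy by blast
qed

lemma two_colours_on_mixed_face:
  assumes "f \<in> Fc - mono_faces col"
  shows "card (col ` tri f) \<ge> 2"
proof (rule ccontr)
  assume "\<not> ?thesis"
  moreover have "col ` tri f \<noteq> {}" using face_nonempty assms by blast
  moreover have "finite (col ` tri f)"
    using finite_subset[OF face_subset finite_V] assms by simp
  ultimately have "card (col ` tri f) \<noteq> 0" "card (col ` tri f) < 2" by simp_all
  then have "card (col ` tri f) = 1" by linarith
  then obtain c where "col ` tri f = {c}" by (rule card_1_singletonE)
  moreover have "col ` tri f \<subseteq> col ` V" using face_subset assms by blast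
  ultimately have "tri f \<subseteq> colour_class col c" "c \<in> col ` V"
    using face_subset assms by (auto simp: colour_class_def)
  with assms show False by (auto simp: mono_faces_def)
qed

text \<open>Every edge lies on two faces, every mixed face has at least two bichromatic sides and
  every trichromatic face has three.\<close>
lemma card_mixed_faces_le_bichromatic_edges:
  "2 * card (Fc - mono_faces col) + card {f \<in> Fc. card (col ` tri f) = 3} \<le> 2 * card (E - mono_edges col)"
proof -
  define Eb where "Eb = E - mono_edges col"
  define Fn where "Fn = Fc - mono_faces col"
  define Ft where "Ft = {f \<in> Fc. card (col ` tri f) = 3}"
  have "Ft \<subseteq> Fn"
  proof
    fix f assume f: "f \<in> Ft"
    have "f \<notin> mono_faces col"
    proof
      assume "f \<in> mono_faces col"
      then obtain c where "tri f \<subseteq> colour_class col c" by (auto simp: mono_faces_def)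
      then have "col ` tri f \<subseteq> {c}" by (auto simp: colour_class_def)
      then have "card (col ` tri f) \<le> 1" using card_mono[of "{c}"] by fastforce
      with f show False by (simp add: Ft_def)
    qed
    with f show "f \<in> Fn" by (simp add: Ft_def Fn_def)
  qed
  have "finite Fn" using finite_Fc by (simp add: Fn_def)
  have "(\<Sum>f\<in>Fn. 2 + of_bool (f \<in> Ft)) = (\<Sum>f\<in>Fn. 2) + (\<Sum>f\<in>Fn. of_bool (f \<in> Ft))"
    by (rule sum.distrib)
  also have "\<dots> = 2 * card Fn + card Ft"
    using \<open>Ft \<subseteq> Fn\<close> \<open>finite Fn\<close> by (simp add: Int_absorb1)
  finally have "2 * card Fn + card Ft = (\<Sum>f\<in>Fn. 2 + of_bool (f \<in> Ft))" ..
  also have "\<dots> \<le> (\<Sum>f\<in>Fn. card (col ` tri f))"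
  proof (rule sum_mono)
    fix f assume "f \<in> Fn"
    then have "2 \<le> card (col ` tri f)" using two_colours_on_mixed_face by (simp add: Fn_def)
    moreover have "f \<in> Ft \<Longrightarrow> card (col ` tri f) = 3" by (simp add: Ft_def)
    ultimately show "2 + of_bool (f \<in> Ft) \<le> card (col ` tri f)" by (cases "f \<in> Ft") auto
  qed
  also have "\<dots> \<le> (\<Sum>f\<in>Fn. card {e \<in> Eb. e \<subseteq> tri f})"
  proof (rule sum_mono)
    fix f assume f: "f \<in> Fn"
    then have mixed: "f \<in> Fc - mono_faces col" by (simp add: Fn_def)
    have "card (col ` tri f) \<le> card {{x, y} | x y. x \<in> tri f \<and> y \<in> tri f \<and> col x \<noteq> col y}"
      using card_colours_le_card_bichromatic_pairs[OF face_card two_colours_on_mixed_face[OF mixed]] mixed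
      by simp
    then show "card (col ` tri f) \<le> card {e \<in> Eb. e \<subseteq> tri f}"
      using bichromatic_sides[of f col] f by (simp add: Fn_def Eb_def)
  qed
  also have "\<dots> \<le> (\<Sum>f\<in>Fc. card {e \<in> Eb. e \<subseteq> tri f})"
    using finite_Fc by (intro sum_mono2) (auto simp: Fn_def)
  also have "\<dots> = (\<Sum>e\<in>Eb. card {f \<in> Fc. e \<subseteq> tri f})"
    using finite_Fc finite_E by (intro sum_card_filter_swap) (simp_all add: Eb_def)
  also have "\<dots> = 2 * card Eb"
    using edge_two_faces by (simp add: Eb_def)
  finally show ?thesis by (simp add: Eb_def Fn_def Ft_def)
qed

lemma trichromatic_faces_le:
  assumes "\<forall>c\<in>col ` V. adj_connected E (colour_class col c)"
  shows "card {f \<in> Fc. card (col ` tri f) = 3} \<le> 2 * (card (col ` V) - 2)"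
proof (cases "{f \<in> Fc. card (col ` tri f) = 3} = {}")
  case False
  then obtain f where f: "f \<in> Fc" "card (col ` tri f) = 3" by blast
  then have "card (col ` V) \<ge> 3"
    using card_mono[OF finite_imageI[OF finite_V] image_mono[OF face_subset[OF f(1)], of col]] f(2) by simp
  then have "card V + card (mono_faces col) \<le> card (mono_edges col) + card (col ` V)"
    using card_V_mono_faces_le[OF assms] by simp
  moreover have "card E = card (mono_edges col) + card (E - mono_edges col)"
    using card_Diff_subset[OF finite_subset, OF _ finite_E] card_mono[OF finite_E]
    by (metis (no_types, lifting) mono_edges_def mem_Collect_eq subsetI le_add_diff_inverse)
  moreover have "card Fc = card (mono_faces col) + card (Fc - mono_faces col)"
    using card_Diff_subset[OF finite_subset, OF _ finite_Fc] card_mono[OF finite_Fc]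
    by (metis (no_types, lifting) mono_faces_def mem_Collect_eq subsetI le_add_diff_inverse)
  ultimately show ?thesis
    using euler card_mixed_faces_le_bichromatic_edges[of col] \<open>card (col ` V) \<ge> 3\<close> by linarith
qed (simp only: card.empty)

end

context voronoi_family
begin

lemma type1_singular_card_region_of_image:
  assumes "finite F" "card F = 3" "tri f \<subseteq> V" "type1_singular V E w loc rad F tri f"
  shows "card (region_of ` tri f) = 3"
proof -
  obtain q1 q2 q3 where q: "q1 \<in> F" "q2 \<in> F" "q3 \<in> F" "q1 \<noteq> q2" "q1 \<noteq> q3" "q2 \<noteq> q3"
    and meet: "meet_at V E w loc rad F tri q1 q2 f" "meet_at V E w loc rad F tri q1 q3 f"
    using assms(4) unfolding type1_singular_def by blast
  obtain a b c where "a \<in> tri f" "a \<in> M q1" "b \<in> tri f" "b \<in> M q2" "c \<in> tri f" "c \<in> M q3"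
    using meet unfolding meet_at_def by blast
  then have "{q1, q2, q3} \<subseteq> region_of ` tri f" using region_of_eq q(1-3) by blast
  moreover have "region_of ` tri f \<subseteq> F"
    using region_of_image[OF assms(1)] assms(2,3) by force
  moreover have "card {q1, q2, q3} = 3" using q(4-6) by simp
  ultimately show ?thesis
    using card_mono[of "region_of ` tri f" "{q1, q2, q3}"] card_mono[OF assms(1), of "region_of ` tri f"]
      finite_subset[OF \<open>region_of ` tri f \<subseteq> F\<close> assms(1)] assms(2) by linarith
qed

end

theorem lemma4p8:
  fixes V :: "'v set" and E :: "'v set set" and Fc :: "'f set" and tri :: "'f \<Rightarrow> 'v set"
    and w :: "'v set \<Rightarrow> real" and loc :: "'o \<Rightarrow> 'v set" and rad :: "'o \<Rightarrow> real"
    and p1 p2 p3 :: 'o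
  assumes "sphere_triangulation V E Fc tri"
    and "\<forall>e\<in>E. w e > 0"
    and "p1 \<noteq> p2" and "p1 \<noteq> p3" and "p2 \<noteq> p3"
    and "\<forall>p\<in>{p1, p2, p3}. is_object V E loc rad p"
    and "standing_assumption V E w rad {p1, p2, p3}"
    and "normal_family V E w loc rad {p1, p2, p3}"
  shows "card {f \<in> Fc. type1_singular V E w loc rad {p1, p2, p3} tri f} \<le> 2"
proof -
  let ?F = "{p1, p2, p3}"
  interpret triangulated_sphere V E Fc tri by (rule triangulated_sphere.intro) fact
  interpret voronoi_family V E w loc rad ?F
    using finite_V connected_V assms(2,6-8) unfolding is_object_def
    by unfold_locales blast+
  let ?col = region_of
  have F: "finite ?F" "?F \<noteq> {}" "card ?F = 3" using assms(3-5) by auto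
  have "\<forall>c\<in>?col ` V. adj_connected E (colour_class ?col c)"
    using region_of_image[OF F(1,2)] fibre_region_of[OF F(1,2)] voronoi_adj_connected
    by (simp add: colour_class_def)
  then have trichromatic: "card {f \<in> Fc. card (?col ` tri f) = 3} \<le> 2"
    using trichromatic_faces_le[of ?col] region_of_image[OF F(1,2)] F(3) by simp
  have "{f \<in> Fc. type1_singular V E w loc rad ?F tri f} \<subseteq> {f \<in> Fc. card (?col ` tri f) = 3}"
    using type1_singular_card_region_of_image[where tri = tri, OF F(1,3) face_subset] by blast
  then have "card {f \<in> Fc. type1_singular V E w loc rad ?F tri f} \<le> card {f \<in> Fc. card (?col ` tri f) = 3}"
    by (rule card_mono[rotated]) (simp add: finite_Fc)
  with trichromatic show ?thesis by linarith
qed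

end
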